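(* Let $X$ be a discretely geodesic metric space with $\beta$-stable intervals, and let $x,x',v\in X$. Define $F_{xv}\colon B(v,\beta)\to\mathbb Z$ by $F_{xv}(u)=d(x,u)-d(x,v)$, and similarly $F_{x'v}$. If $F_{xv}\le F_{x'v}$ on $B(v,\beta)$, then $C(x,v)\subset C(x',v)$. Hence $F_{xv}=F_{x'v}$ implies $C(x,v)=C(x',v)$.
   Context: $B(v,\beta)$ is the closed ball. $X$ is discretely geodesic if $d$ is integer valued and any $x,y$ are joined by an isometric embedding $\gamma\colon\{0,\dots,d(x,y)\}\to X$ with $\gamma(0)=x,\gamma(d(x,y))=y$. $I(x,y)=\{u: d(x,u)+d(u,y)=d(x,y)\}$; $C(x,v)=\{y: v\in I(x,y)\}$. $\beta$-stable intervals: for all $x,y,y'$ with $d(y,y')=1$, the Hausdorff distance between $I(x,y)$ and $I(x,y')$ is at most $\beta$. *)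

theory Defs
  imports Complex_Main
begin

definition int_metric :: "'a set \<Rightarrow> ('a \<Rightarrow> 'a \<Rightarrow> int) \<Rightarrow> bool" where
  "int_metric X d \<longleftrightarrow>
     (\<forall>x\<in>X. \<forall>y\<in>X. d x y \<ge> 0 \<and> (d x y = 0 \<longleftrightarrow> x = y) \<and> d x y = d y x) \<and>
     (\<forall>x\<in>X. \<forall>y\<in>X. \<forall>z\<in>X. d x z \<le> d x y + d y z)"

definition discretely_geodesic :: "'a set \<Rightarrow> ('a \<Rightarrow> 'a \<Rightarrow> int) \<Rightarrow> bool" where
  "discretely_geodesic X d \<longleftrightarrow> int_metric X d \<and>
     (\<forall>x\<in>X. \<forall>y\<in>X. \<exists>\<gamma> :: nat \<Rightarrow> 'a.
        \<gamma> 0 = x \<and> \<gamma> (nat (d x y)) = y \<and>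
        (\<forall>i\<le>nat (d x y). \<gamma> i \<in> X) \<and>
        (\<forall>i\<le>nat (d x y). \<forall>j\<le>nat (d x y). d (\<gamma> i) (\<gamma> j) = \<bar>int i - int j\<bar>))"

definition cball_X :: "'a set \<Rightarrow> ('a \<Rightarrow> 'a \<Rightarrow> int) \<Rightarrow> 'a \<Rightarrow> real \<Rightarrow> 'a set" where
  "cball_X X d v r = {u\<in>X. real_of_int (d v u) \<le> r}"

definition interval :: "'a set \<Rightarrow> ('a \<Rightarrow> 'a \<Rightarrow> int) \<Rightarrow> 'a \<Rightarrow> 'a \<Rightarrow> 'a set" where
  "interval X d x y = {u\<in>X. d x u + d u y = d x y}"

definition cone :: "'a set \<Rightarrow> ('a \<Rightarrow> 'a \<Rightarrow> int) \<Rightarrow> 'a \<Rightarrow> 'a \<Rightarrow> 'a set" where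
  "cone X d x v = {y\<in>X. v \<in> interval X d x y}"

text \<open>Since the metric is
  integer valued, the infimum of distances from a point to a nonempty set is attained,
  so this is the literal unfolding of "sup_a inf_b d(a,b) <= r and symmetrically".\<close>
definition hausdorff_le :: "('a \<Rightarrow> 'a \<Rightarrow> int) \<Rightarrow> 'a set \<Rightarrow> 'a set \<Rightarrow> real \<Rightarrow> bool" where
  "hausdorff_le d A B r \<longleftrightarrow>
     (\<forall>a\<in>A. \<exists>b\<in>B. real_of_int (d a b) \<le> r) \<and> (\<forall>b\<in>B. \<exists>a\<in>A. real_of_int (d a b) \<le> r)"

definition stable_intervals :: "'a set \<Rightarrow> ('a \<Rightarrow> 'a \<Rightarrow> int) \<Rightarrow> real \<Rightarrow> bool" where
  "stable_intervals X d \<beta> \<longleftrightarrow>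
     (\<forall>x\<in>X. \<forall>y\<in>X. \<forall>y'\<in>X. d y y' = 1 \<longrightarrow>
        hausdorff_le d (interval X d x y) (interval X d x y') \<beta>)"

end

theory Submission
  imports Defs
begin

text \<open>Induct on d(v,y) for y \<in> C(x,v). Step back from y along a geodesic from v to a neighbour y'
  with d(v,y') = d(v,y) - 1; then y' \<in> C(x,v), so by induction v \<in> I(x',y'). Stability
  moves v to a point w \<in> I(x',y) with d(v,w) \<le> \<beta>, and the hypothesis F_{xv}(w) \<le> F_{x'v}(w),
  combined with v \<in> I(x,y), forces v \<in> I(x',y).\<close>

lemma int_metric_nonneg:
  "int_metric X d \<Longrightarrow> a \<in> X \<Longrightarrow> b \<in> X \<Longrightarrow> 0 \<le> d a b"
  unfolding int_metric_def by blast

lemma int_metric_self: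
  "int_metric X d \<Longrightarrow> a \<in> X \<Longrightarrow> d a a = 0"
  unfolding int_metric_def by blast

lemma int_metric_eq_0_iff:
  "int_metric X d \<Longrightarrow> a \<in> X \<Longrightarrow> b \<in> X \<Longrightarrow> d a b = 0 \<longleftrightarrow> a = b"
  unfolding int_metric_def by blast

lemma int_metric_triangle:
  "int_metric X d \<Longrightarrow> a \<in> X \<Longrightarrow> b \<in> X \<Longrightarrow> c \<in> X \<Longrightarrow> d a c \<le> d a b + d b c"
  unfolding int_metric_def by blast

lemma discretely_geodesic_int_metric:
  "discretely_geodesic X d \<Longrightarrow> int_metric X d"
  unfolding discretely_geodesic_def by blast

lemma discretely_geodesic_predecessor:
  assumes "discretely_geodesic X d" "v \<in> X" "y \<in> X" "d v y = int (Suc n)"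
  obtains y' where "y' \<in> X" "d v y' = int n" "d y' y = 1"
proof -
  obtain \<gamma> :: "nat \<Rightarrow> 'a" where "\<gamma> 0 = v" "\<gamma> (nat (d v y)) = y"
    and \<gamma>X: "\<forall>i\<le>nat (d v y). \<gamma> i \<in> X"
    and \<gamma>dist: "\<forall>i\<le>nat (d v y). \<forall>j\<le>nat (d v y). d (\<gamma> i) (\<gamma> j) = \<bar>int i - int j\<bar>"
    using assms unfolding discretely_geodesic_def by blast
  moreover have "nat (d v y) = Suc n"
    using assms(4) by simp
  ultimately have "\<gamma> n \<in> X" "d (\<gamma> 0) (\<gamma> n) = int n" "d (\<gamma> n) (\<gamma> (Suc n)) = 1"
    by auto
  then show thesis
    using that \<open>\<gamma> 0 = v\<close> \<open>\<gamma> (nat (d v y)) = y\<close> \<open>nat (d v y) = Suc n\<close> by simp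
qed

lemma interval_restrict:
  assumes metric: "int_metric X d" and "x \<in> X" "y \<in> X"
    and "v \<in> interval X d x y" "y' \<in> interval X d v y"
  shows "v \<in> interval X d x y'"
proof -
  have "v \<in> X" "y' \<in> X"
    using assms(4,5) unfolding interval_def by auto
  have "d x y' \<le> d x v + d v y'"
    using int_metric_triangle[OF metric \<open>x \<in> X\<close> \<open>v \<in> X\<close> \<open>y' \<in> X\<close>] .
  moreover have "d x y \<le> d x y' + d y' y"
    using int_metric_triangle[OF metric \<open>x \<in> X\<close> \<open>y' \<in> X\<close> \<open>y \<in> X\<close>] .
  ultimately show ?thesis
    using assms(4,5) unfolding interval_def by auto
qed

lemma interval_step_of_stable:
  assumes metric: "int_metric X d" and "stable_intervals X d \<beta>"
    and "x \<in> X" "x' \<in> X" "y \<in> X" "y' \<in> X" "d y' y = 1"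
    and le: "\<forall>u\<in>cball_X X d v \<beta>. d x u - d x v \<le> d x' u - d x' v"
    and v_xy: "v \<in> interval X d x y" and v_x'y': "v \<in> interval X d x' y'"
  shows "v \<in> interval X d x' y"
proof -
  have "hausdorff_le d (interval X d x' y') (interval X d x' y) \<beta>"
    using assms(2,4-7) unfolding stable_intervals_def by blast
  then obtain w where w: "w \<in> interval X d x' y" and "real_of_int (d v w) \<le> \<beta>"
    using v_x'y' unfolding hausdorff_le_def by blast
  then have "w \<in> X" "w \<in> cball_X X d v \<beta>"
    unfolding interval_def cball_X_def by auto
  have "v \<in> X"
    using v_xy unfolding interval_def by simp
  have "d x w - d x v \<le> d x' w - d x' v"
    using le \<open>w \<in> cball_X X d v \<beta>\<close> by blast
  moreover have "d x y \<le> d x w + d w y"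
    using int_metric_triangle[OF metric \<open>x \<in> X\<close> \<open>w \<in> X\<close> \<open>y \<in> X\<close>] .
  moreover have "d x' y \<le> d x' v + d v y"
    using int_metric_triangle[OF metric \<open>x' \<in> X\<close> \<open>v \<in> X\<close> \<open>y \<in> X\<close>] .
  ultimately show ?thesis
    using w v_xy \<open>v \<in> X\<close> unfolding interval_def by simp
qed

lemma cone_subset_of_ball_le:
  assumes dg: "discretely_geodesic X d" and st: "stable_intervals X d \<beta>"
    and "x \<in> X" "x' \<in> X" "v \<in> X"
    and le: "\<forall>u\<in>cball_X X d v \<beta>. d x u - d x v \<le> d x' u - d x' v"
  shows "cone X d x v \<subseteq> cone X d x' v"
proof
  have metric: "int_metric X d"
    using dg by (rule discretely_geodesic_int_metric)
  have "v \<in> interval X d x' y"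
    if "y \<in> X" "d v y = int n" "v \<in> interval X d x y" for n y
    using that
  proof (induction n arbitrary: y)
    case 0
    then show ?case
      using metric \<open>v \<in> X\<close> int_metric_eq_0_iff int_metric_self
      unfolding interval_def by fastforce
  next
    case (Suc n)
    obtain y' where "y' \<in> X" "d v y' = int n" "d y' y = 1"
      using discretely_geodesic_predecessor[OF dg \<open>v \<in> X\<close> Suc.prems(1,2)] .
    moreover have "y' \<in> interval X d v y"
      using calculation Suc.prems(1,2) unfolding interval_def by simp
    ultimately have "v \<in> interval X d x' y'"
      using Suc.IH interval_restrict[OF metric \<open>x \<in> X\<close> Suc.prems(1,3)] by blast
    then show ?case
      using interval_step_of_stable[OF metric st \<open>x \<in> X\<close> \<open>x' \<in> X\<close> Suc.prems(1) \<open>y' \<in> X\<close>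
          \<open>d y' y = 1\<close> le Suc.prems(3)] by blast
  qed
  moreover fix y assume "y \<in> cone X d x v"
  moreover have "y \<in> X \<Longrightarrow> d v y = int (nat (d v y))"
    using int_metric_nonneg[OF metric \<open>v \<in> X\<close>] by simp
  ultimately show "y \<in> cone X d x' v"
    unfolding cone_def by blast
qed

theorem lemma5p8:
  fixes X :: "'a set" and d :: "'a \<Rightarrow> 'a \<Rightarrow> int" and \<beta> :: real and x x' v :: 'a
  assumes "discretely_geodesic X d"
    and "stable_intervals X d \<beta>"
    and "x \<in> X" and "x' \<in> X" and "v \<in> X"
  shows "((\<forall>u\<in>cball_X X d v \<beta>. d x u - d x v \<le> d x' u - d x' v)
           \<longrightarrow> cone X d x v \<subseteq> cone X d x' v) \<and>
         ((\<forall>u\<in>cball_X X d v \<beta>. d x u - d x v = d x' u - d x' v)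
           \<longrightarrow> cone X d x v = cone X d x' v)"
proof (intro conjI impI)
  show "cone X d x v \<subseteq> cone X d x' v"
    if "\<forall>u\<in>cball_X X d v \<beta>. d x u - d x v \<le> d x' u - d x' v"
    using cone_subset_of_ball_le[OF assms that] .
next
  assume eq: "\<forall>u\<in>cball_X X d v \<beta>. d x u - d x v = d x' u - d x' v"
  show "cone X d x v = cone X d x' v"
  proof
    show "cone X d x v \<subseteq> cone X d x' v"
      using cone_subset_of_ball_le[OF assms] eq by simp
    show "cone X d x' v \<subseteq> cone X d x v"
      using cone_subset_of_ball_le[OF assms(1,2,4,3,5)] eq by simp
  qed
qed

end
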